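(* Let $\sigma$ be a reasonable strategy of player $0$ in the escape arena $\mathcal{A}_\bot$. If there is a vertex $s\in W_0$ with $\mathcal{V}_\sigma(s)\prec\infty$, then $\sigma$ has at least one strict improvement, i.e. $S_\sigma\neq\emptyset$.
   Context: Parity game arena: $\mathcal{A}=(V,E,o,c)$ with $V$ finite, $E\subseteq V\times V$, every vertex has a successor, owner map $o:V\to\{0,1\}$, colouring $c:V\to\{0,\dots,d-1\}$; $V_i=o^{-1}(i)$. An infinite vertex sequence is won by player $0$ iff the largest colour occurring infinitely often is even. A cycle is $i$-dominated if its largest colour has parity $i$. $W_0$ is the set of vertices from which player $0$ has a winning strategy in the parity game on $\mathcal{A}$. Escape arena $\mathcal{A}_\bot$: vertices $V\cup\{\bot\}$, edges $E\cup(V_0\times\{\bot\})$, $\bot$ owned by player $0$ with no outgoing edges. $E_0$ = edges of $\mathcal{A}_\bot$ leaving $V_0$, $E_1=E\cap(V_1\times V)$. A strategy of player $i$ is a set $\sigma\subseteq E_i$ with $s\sigma\neq\emptyset$ for all $s\in V_i$. $\mathcal{A}_\bot|_{\sigma,\tau}$ has edges $\sigma\cup\tau$, $\mathcal{A}_\bot|_\sigma$ has edges $\sigma\cup E_1$; plays are maximal paths. Colour profiles $\mathcal{P}=\mathbb{Z}^d\cup\{-\infty,\infty\}$, $\text{\o}$ zero vector; $\wp(s)$ unit vector at coordinate $c(s)$; for a finite path the sum over vertices in $V$; infinite play: $\infty$ if won by player $0$, else $-\infty$. Addition componentwise, $x+\pm\infty=\pm\infty$. Order $\prec$: $-\infty$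 least, $\infty$ greatest; for distinct $p,p'\in\mathbb{Z}^d$ with $k$ the largest differing index, $p\prec p'$ iff ($k$ even, $p_k<p'_k$) or ($k$ odd, $p_k>p'_k$). Valuation: $\mathcal{V}_\sigma(\bot)=\text{\o}$, $\mathcal{V}_\sigma(s)=\min^\prec_\tau\max^\prec\{\wp(\pi)\mid\pi$ a play in $\mathcal{A}_\bot|_{\sigma,\tau}$ from $s\}$. $\sigma$ is reasonable if $\mathcal{A}_\bot|_\sigma$ has no $1$-dominated cycle. $S_\sigma$ is the set of edges $(s,t)\in E_0$ with $\mathcal{V}_\sigma(s)\prec\wp(s)+\mathcal{V}_\sigma(t)$ (strict improvements). *)

theory Defs
  imports Main
begin

definition arena :: "'v set \<Rightarrow> ('v \<times> 'v) set \<Rightarrow> ('v \<Rightarrow> nat) \<Rightarrow> ('v \<Rightarrow> nat) \<Rightarrow> nat \<Rightarrow> bool" where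
  "arena V E own col d \<longleftrightarrow> finite V \<and> E \<subseteq> V \<times> V \<and> (\<forall>v\<in>V. \<exists>w. (v, w) \<in> E)
     \<and> (\<forall>v\<in>V. own v = 0 \<or> own v = 1) \<and> (\<forall>v\<in>V. col v < d)"

definition won0_seq :: "('v \<Rightarrow> nat) \<Rightarrow> (nat \<Rightarrow> 'v) \<Rightarrow> bool" where
  "won0_seq col f \<longleftrightarrow> even (Max {c. \<exists>\<^sub>\<infinity> n. col (f n) = c})"

definition hist_strategy0 :: "'v set \<Rightarrow> ('v \<times> 'v) set \<Rightarrow> ('v \<Rightarrow> nat) \<Rightarrow> ('v list \<Rightarrow> 'v) \<Rightarrow> bool" where
  "hist_strategy0 V E own str \<longleftrightarrow>
     (\<forall>h. h \<noteq> [] \<and> set h \<subseteq> V \<and> own (last h) = 0 \<longrightarrow> (last h, str h) \<in> E)"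

definition consistent_play :: "('v \<times> 'v) set \<Rightarrow> ('v \<Rightarrow> nat) \<Rightarrow> ('v list \<Rightarrow> 'v) \<Rightarrow> 'v \<Rightarrow> (nat \<Rightarrow> 'v) \<Rightarrow> bool" where
  "consistent_play E own str s f \<longleftrightarrow> f 0 = s \<and> (\<forall>n. (f n, f (Suc n)) \<in> E)
     \<and> (\<forall>n. own (f n) = 0 \<longrightarrow> f (Suc n) = str (map f [0..<Suc n]))"

definition W0 :: "'v set \<Rightarrow> ('v \<times> 'v) set \<Rightarrow> ('v \<Rightarrow> nat) \<Rightarrow> ('v \<Rightarrow> nat) \<Rightarrow> 'v set" where
  "W0 V E own col = {s \<in> V. \<exists>str. hist_strategy0 V E own str \<and>
        (\<forall>f. consistent_play E own str s f \<longrightarrow> won0_seq col f)}"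

text \<open>Vertices of the escape arena are of type 'v option: Some v for v in V, None for bottom.\<close>

definition esc_edges :: "'v set \<Rightarrow> ('v \<times> 'v) set \<Rightarrow> ('v \<Rightarrow> nat) \<Rightarrow> ('v option \<times> 'v option) set" where
  "esc_edges V E own = {(Some u, Some v) | u v. (u, v) \<in> E} \<union> {(Some v, None) | v. v \<in> V \<and> own v = 0}"

definition E0 :: "'v set \<Rightarrow> ('v \<times> 'v) set \<Rightarrow> ('v \<Rightarrow> nat) \<Rightarrow> ('v option \<times> 'v option) set" where
  "E0 V E own = {(x, y) \<in> esc_edges V E own. \<exists>v. x = Some v \<and> v \<in> V \<and> own v = 0}"

definition E1 :: "'v set \<Rightarrow> ('v \<times> 'v) set \<Rightarrow> ('v \<Rightarrow> nat) \<Rightarrow> ('v option \<times> 'v option) set" where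
  "E1 V E own = {(Some u, Some v) | u v. (u, v) \<in> E \<and> own u = 1}"

definition strategy :: "nat \<Rightarrow> 'v set \<Rightarrow> ('v \<times> 'v) set \<Rightarrow> ('v \<Rightarrow> nat)
    \<Rightarrow> ('v option \<times> 'v option) set \<Rightarrow> bool" where
  "strategy i V E own \<sigma> \<longleftrightarrow> \<sigma> \<subseteq> (if i = 0 then E0 V E own else E1 V E own)
     \<and> (\<forall>s\<in>V. own s = i \<longrightarrow> (\<exists>y. (Some s, y) \<in> \<sigma>))"

datatype prof = NegInf | Fin "nat \<Rightarrow> int" | PosInf

definition unitv :: "nat \<Rightarrow> (nat \<Rightarrow> int)" where
  "unitv c = (\<lambda>i. if i = c then 1 else 0)"

definition vec_less :: "(nat \<Rightarrow> int) \<Rightarrow> (nat \<Rightarrow> int) \<Rightarrow> bool" where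
  "vec_less p q \<longleftrightarrow> p \<noteq> q \<and>
     (let k = Max {i. p i \<noteq> q i} in (even k \<and> p k < q k) \<or> (odd k \<and> p k > q k))"

fun prof_less :: "prof \<Rightarrow> prof \<Rightarrow> bool" where
  "prof_less NegInf y = (y \<noteq> NegInf)"
| "prof_less (Fin p) y = (case y of NegInf \<Rightarrow> False | Fin q \<Rightarrow> vec_less p q | PosInf \<Rightarrow> True)"
| "prof_less PosInf y = False"

definition prof_le :: "prof \<Rightarrow> prof \<Rightarrow> bool" where
  "prof_le x y \<longleftrightarrow> x = y \<or> prof_less x y"

fun prof_add :: "prof \<Rightarrow> prof \<Rightarrow> prof" where
  "prof_add (Fin p) (Fin q) = Fin (\<lambda>i. p i + q i)"
| "prof_add x PosInf = PosInf"
| "prof_add x NegInf = NegInf"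
| "prof_add PosInf (Fin q) = PosInf"
| "prof_add NegInf (Fin q) = NegInf"

definition wp :: "('v \<Rightarrow> nat) \<Rightarrow> 'v option \<Rightarrow> prof" where
  "wp col x = (case x of None \<Rightarrow> Fin (\<lambda>i. 0) | Some v \<Rightarrow> Fin (unitv (col v)))"

definition path_prof :: "('v \<Rightarrow> nat) \<Rightarrow> 'v option list \<Rightarrow> prof" where
  "path_prof col xs = Fin (\<lambda>i. \<Sum>x\<leftarrow>xs. (case x of None \<Rightarrow> 0 | Some v \<Rightarrow> unitv (col v) i))"

definition fin_play :: "('v option \<times> 'v option) set \<Rightarrow> 'v option \<Rightarrow> 'v option list \<Rightarrow> bool" where
  "fin_play F s xs \<longleftrightarrow> xs \<noteq> [] \<and> hd xs = s \<and>
     (\<forall>i. Suc i < length xs \<longrightarrow> (xs ! i, xs ! Suc i) \<in> F) \<and> (\<forall>y. (last xs, y) \<notin> F)"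

definition inf_play :: "('v option \<times> 'v option) set \<Rightarrow> 'v option \<Rightarrow> (nat \<Rightarrow> 'v option) \<Rightarrow> bool" where
  "inf_play F s f \<longleftrightarrow> f 0 = s \<and> (\<forall>n. (f n, f (Suc n)) \<in> F)"

definition play_profs :: "('v \<Rightarrow> nat) \<Rightarrow> ('v option \<times> 'v option) set \<Rightarrow> 'v option \<Rightarrow> prof set" where
  "play_profs col F s =
     {path_prof col xs | xs. fin_play F s xs} \<union>
     {(if won0_seq col (\<lambda>n. the (f n)) then PosInf else NegInf) | f. inf_play F s f}"

definition greatest_prof :: "prof set \<Rightarrow> prof" where
  "greatest_prof S = (THE x. x \<in> S \<and> (\<forall>y\<in>S. prof_le y x))"

definition least_prof :: "prof set \<Rightarrow> prof" where
  "least_prof S = (THE x. x \<in> S \<and> (\<forall>y\<in>S. prof_le x y))"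

definition valuation :: "'v set \<Rightarrow> ('v \<times> 'v) set \<Rightarrow> ('v \<Rightarrow> nat) \<Rightarrow> ('v \<Rightarrow> nat)
    \<Rightarrow> ('v option \<times> 'v option) set \<Rightarrow> 'v option \<Rightarrow> prof" where
  "valuation V E own col \<sigma> x = (case x of None \<Rightarrow> Fin (\<lambda>i. 0)
     | Some s \<Rightarrow> least_prof {greatest_prof (play_profs col (\<sigma> \<union> \<tau>) (Some s)) | \<tau>. strategy 1 V E own \<tau>})"

definition cycle_in :: "('v option \<times> 'v option) set \<Rightarrow> 'v option list \<Rightarrow> bool" where
  "cycle_in F xs \<longleftrightarrow> xs \<noteq> [] \<and> (\<forall>i. Suc i < length xs \<longrightarrow> (xs ! i, xs ! Suc i) \<in> F)
     \<and> (last xs, hd xs) \<in> F"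

definition reasonable :: "'v set \<Rightarrow> ('v \<times> 'v) set \<Rightarrow> ('v \<Rightarrow> nat) \<Rightarrow> ('v \<Rightarrow> nat)
    \<Rightarrow> ('v option \<times> 'v option) set \<Rightarrow> bool" where
  "reasonable V E own col \<sigma> \<longleftrightarrow>
     (\<forall>xs. cycle_in (\<sigma> \<union> E1 V E own) xs \<longrightarrow> \<not> odd (Max {col v | v. Some v \<in> set xs}))"

definition improvements :: "'v set \<Rightarrow> ('v \<times> 'v) set \<Rightarrow> ('v \<Rightarrow> nat) \<Rightarrow> ('v \<Rightarrow> nat)
    \<Rightarrow> ('v option \<times> 'v option) set \<Rightarrow> ('v option \<times> 'v option) set" where
  "improvements V E own col \<sigma> = {(s, t) \<in> E0 V E own.
     prof_less (valuation V E own col \<sigma> s) (prof_add (wp col s) (valuation V E own col \<sigma> t))}"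

end

theory Submission
  imports Defs "HOL-Library.Infinite_Set"
begin

text \<open>Suppose \<open>\<sigma>\<close> has no strict improvement. Then every edge \<open>(u, w)\<close> leaving a player-0 vertex
  satisfies \<open>\<wp>(u) + \<V>\<^sub>\<sigma>(w) \<preceq> \<V>\<^sub>\<sigma>(u)\<close>, and every player-1 vertex has such an edge, namely the
  move of an optimal counter-strategy. Playing player 0's winning strategy from \<open>s\<close> against
  these player-1 moves yields a play won by player 0 along which the valuations descend. Since
  \<open>\<V>\<^sub>\<sigma>(s) \<prec> \<infinity>\<close>, and reasonableness makes every infinite play under \<open>\<sigma>\<close> a win for player 0
  (so no valuation is \<open>-\<infinity>\<close>), all these valuations are vectors, and only finitely many occur.
  Some vector therefore repeats around a stretch of the play containing the largest colour \<open>c\<close>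
  seen infinitely often. Summing the inequalities over that stretch shows that its colour profile,
  whose leading coordinate is \<open>c\<close>, is negative; so \<open>c\<close> is odd, contradicting that player 0 wins.\<close>

section \<open>The order on colour profiles\<close>

text \<open>\<open>vec_less\<close> compares at the largest differing index, a \<open>Max\<close> that is junk for infinite sets;
  it is a strict total order only on finitely supported vectors, whence the side conditions below.\<close>

definition fsupp :: "(nat \<Rightarrow> int) \<Rightarrow> bool" where
  "fsupp p \<longleftrightarrow> finite {i. p i \<noteq> 0}"

fun fsupp_prof :: "prof \<Rightarrow> bool" where
  "fsupp_prof (Fin p) = fsupp p"
| "fsupp_prof NegInf = True"
| "fsupp_prof PosInf = True"

lemma fsupp_add: "fsupp p \<Longrightarrow> fsupp q \<Longrightarrow> fsupp (\<lambda>i. p i + q i)"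
  unfolding fsupp_def by (rule finite_subset[of _ "{i. p i \<noteq> 0} \<union> {i. q i \<noteq> 0}"]) auto

lemma fsupp_diff: "fsupp p \<Longrightarrow> fsupp q \<Longrightarrow> fsupp (\<lambda>i. q i - p i)"
  unfolding fsupp_def by (rule finite_subset[of _ "{i. p i \<noteq> 0} \<union> {i. q i \<noteq> 0}"]) auto

lemma fsupp_unitv: "fsupp (unitv c)"
  unfolding fsupp_def unitv_def by simp

lemma fsupp_prof_add: "fsupp_prof x \<Longrightarrow> fsupp a \<Longrightarrow> fsupp_prof (prof_add (Fin a) x)"
  by (cases x) (auto intro: fsupp_add)

lemma vec_less_add_left: "vec_less (\<lambda>i. r i + p i) (\<lambda>i. r i + q i) \<longleftrightarrow> vec_less p q"
proof -
  have "{i. r i + p i \<noteq> r i + q i} = {i. p i \<noteq> q i}" by auto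
  moreover have "(\<lambda>i. r i + p i) = (\<lambda>i. r i + q i) \<longleftrightarrow> p = q" by (auto simp: fun_eq_iff)
  ultimately show ?thesis unfolding vec_less_def Let_def by simp
qed

lemma vec_less_asym: "vec_less p q \<Longrightarrow> \<not> vec_less q p"
proof -
  have "{i. q i \<noteq> p i} = {i. p i \<noteq> q i}" by auto
  then show "vec_less p q \<Longrightarrow> \<not> vec_less q p" unfolding vec_less_def Let_def by auto
qed

lemma vec_less_total:
  assumes "fsupp p" "fsupp q" "p \<noteq> q"
  shows "vec_less p q \<or> vec_less q p"
proof -
  let ?D = "{i. p i \<noteq> q i}"
  have "?D \<subseteq> {i. p i \<noteq> 0} \<union> {i. q i \<noteq> 0}" by auto
  then have "finite ?D" using assms(1,2) unfolding fsupp_def by (auto intro: finite_subset)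
  moreover have "?D \<noteq> {}" using assms(3) by auto
  ultimately have "p (Max ?D) \<noteq> q (Max ?D)" using Max_in by blast
  moreover have "{i. q i \<noteq> p i} = ?D" by auto
  ultimately show ?thesis using assms(3) unfolding vec_less_def Let_def by auto
qed

definition vec_pos :: "(nat \<Rightarrow> int) \<Rightarrow> bool" where
  "vec_pos r \<longleftrightarrow> vec_less (\<lambda>i. 0) r"

lemma vec_less_iff_vec_pos: "vec_less p q \<longleftrightarrow> vec_pos (\<lambda>i. q i - p i)"
  unfolding vec_pos_def using vec_less_add_left[of "\<lambda>i. - p i" p q] by simp

lemma vec_pos_iff_leading:
  assumes "fsupp r"
  shows "vec_pos r \<longleftrightarrow> (\<exists>k. (\<forall>i>k. r i = 0) \<and> 0 < (-1) ^ k * r k)"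
proof -
  let ?S = "{i. r i \<noteq> 0}"
  have S: "{i. 0 \<noteq> r i} = ?S" by auto
  have sign: "0 < (-1::int) ^ k * r k \<longleftrightarrow> (even k \<and> 0 < r k) \<or> (odd k \<and> r k < 0)" for k
    by (cases "even k") (auto simp: zero_less_mult_iff)
  have "vec_pos r \<longleftrightarrow> r \<noteq> (\<lambda>i. 0) \<and> 0 < (-1) ^ Max ?S * r (Max ?S)"
    unfolding vec_pos_def vec_less_def S sign Let_def by auto
  also have "\<dots> \<longleftrightarrow> (\<exists>k. (\<forall>i>k. r i = 0) \<and> 0 < (-1) ^ k * r k)"
  proof
    assume "r \<noteq> (\<lambda>i. 0) \<and> 0 < (-1) ^ Max ?S * r (Max ?S)"
    moreover have "\<forall>i>Max ?S. r i = 0"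
      using Max_ge assms unfolding fsupp_def by (metis (mono_tags) leD mem_Collect_eq)
    ultimately show "\<exists>k. (\<forall>i>k. r i = 0) \<and> 0 < (-1) ^ k * r k" by blast
  next
    assume "\<exists>k. (\<forall>i>k. r i = 0) \<and> 0 < (-1) ^ k * r k"
    then obtain k where above: "\<forall>i>k. r i = 0" and pos: "0 < (-1) ^ k * r k" by blast
    have "?S \<subseteq> {..k}" using above by (auto simp: not_less[symmetric])
    then have "Max ?S = k"
      by (intro Max_eqI) (use pos finite_subset in auto)
    with pos show "r \<noteq> (\<lambda>i. 0) \<and> 0 < (-1) ^ Max ?S * r (Max ?S)" by auto
  qed
  finally show ?thesis .
qed

lemma vec_pos_add:
  assumes "vec_pos a" "vec_pos b" "fsupp a" "fsupp b"
  shows "vec_pos (\<lambda>i. a i + b i)"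
proof -
  obtain ka kb where a: "\<forall>i>ka. a i = 0" "0 < (-1) ^ ka * a ka"
    and b: "\<forall>i>kb. b i = 0" "0 < (-1) ^ kb * b kb"
    using assms vec_pos_iff_leading by meson
  define k where "k = max ka kb"
  have "0 \<le> (-1::int) ^ k * a k" "0 \<le> (-1::int) ^ k * b k"
    using a b unfolding k_def by (metis le_less max_def not_le mult_zero_right)+
  moreover have "0 < (-1::int) ^ k * a k \<or> 0 < (-1::int) ^ k * b k"
    using a b unfolding k_def by (metis max_def)
  ultimately have "0 < (-1) ^ k * (a k + b k)" by (auto simp: distrib_left)
  moreover have "\<forall>i>k. a i + b i = 0" using a b unfolding k_def by simp
  ultimately show ?thesis using vec_pos_iff_leading[OF fsupp_add[OF assms(3,4)]] by blast
qed

lemma vec_less_trans: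
  assumes "vec_less p q" "vec_less q r" "fsupp p" "fsupp q" "fsupp r"
  shows "vec_less p r"
proof -
  have "vec_pos (\<lambda>i. (q i - p i) + (r i - q i))"
    using assms by (intro vec_pos_add fsupp_diff) (simp_all add: vec_less_iff_vec_pos)
  then show ?thesis unfolding vec_less_iff_vec_pos by simp
qed

lemma prof_less_trans:
  "prof_less x y \<Longrightarrow> prof_less y z \<Longrightarrow> fsupp_prof x \<Longrightarrow> fsupp_prof y \<Longrightarrow> fsupp_prof z
    \<Longrightarrow> prof_less x z"
  by (cases x; cases y; cases z) (auto intro: vec_less_trans)

lemma prof_less_asym: "prof_less x y \<Longrightarrow> \<not> prof_less y x"
  by (cases x; cases y) (auto dest: vec_less_asym)

lemma prof_less_irrefl: "\<not> prof_less x x"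
  by (cases x) (auto simp: vec_less_def)

lemma prof_le_trans:
  "prof_le x y \<Longrightarrow> prof_le y z \<Longrightarrow> fsupp_prof x \<Longrightarrow> fsupp_prof y \<Longrightarrow> fsupp_prof z
    \<Longrightarrow> prof_le x z"
  unfolding prof_le_def using prof_less_trans by blast

lemma prof_le_antisym: "prof_le x y \<Longrightarrow> prof_le y x \<Longrightarrow> x = y"
  unfolding prof_le_def using prof_less_asym by blast

lemma prof_le_total: "fsupp_prof x \<Longrightarrow> fsupp_prof y \<Longrightarrow> prof_le x y \<or> prof_le y x"
  unfolding prof_le_def by (cases x; cases y) (auto dest: vec_less_total)

lemma prof_not_less_iff_le:
  "fsupp_prof x \<Longrightarrow> fsupp_prof y \<Longrightarrow> \<not> prof_less x y \<longleftrightarrow> prof_le y x"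
  using prof_le_total prof_less_asym prof_less_irrefl unfolding prof_le_def by blast

lemma prof_le_add_left: "prof_le x y \<Longrightarrow> prof_le (prof_add (Fin a) x) (prof_add (Fin a) y)"
  unfolding prof_le_def by (cases x; cases y) (auto simp: vec_less_add_left)

lemma prof_le_PosInf: "prof_le x PosInf"
  unfolding prof_le_def by (cases x) auto

lemma prof_le_PosInf_iff: "prof_le PosInf x \<longleftrightarrow> x = PosInf"
  unfolding prof_le_def by auto

lemma finite_total_trans_has_greatest:
  assumes "finite S" "S \<noteq> {}"
    and total: "\<And>x y. x \<in> S \<Longrightarrow> y \<in> S \<Longrightarrow> R x y \<or> R y x"
    and trans: "\<And>x y z. x \<in> S \<Longrightarrow> y \<in> S \<Longrightarrow> z \<in> S \<Longrightarrow> R x y \<Longrightarrow> R y z \<Longrightarrow> R x z"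
  shows "\<exists>m\<in>S. \<forall>y\<in>S. R y m"
  using assms(1,2) total trans
proof (induction S rule: finite_ne_induct)
  case (singleton x)
  then show ?case by blast
next
  case (insert x F)
  then obtain m where m: "m \<in> F" "\<forall>y\<in>F. R y m" by blast
  show ?case
  proof (cases "R m x")
    case True
    then have "\<forall>y\<in>insert x F. R y x" using m insert.prems by blast
    then show ?thesis by blast
  next
    case False
    then show ?thesis using m insert.prems by blast
  qed
qed

lemma prof_greatest_exists:
  assumes "finite S" "S \<noteq> {}" "\<forall>x\<in>S. fsupp_prof x"
  shows "\<exists>m\<in>S. \<forall>y\<in>S. prof_le y m"
  using assms by (intro finite_total_trans_has_greatest) (use prof_le_trans prof_le_total in blast)+

lemma prof_least_exists:
  assumes "finite S" "S \<noteq> {}" "\<forall>x\<in>S. fsupp_prof x"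
  shows "\<exists>m\<in>S. \<forall>y\<in>S. prof_le m y"
  using assms by (intro finite_total_trans_has_greatest[where R = "\<lambda>x y. prof_le y x"])
    (use prof_le_trans prof_le_total in blast)+

lemma greatest_prof_eqI: "m \<in> S \<Longrightarrow> \<forall>y\<in>S. prof_le y m \<Longrightarrow> greatest_prof S = m"
  unfolding greatest_prof_def by (rule the_equality) (use prof_le_antisym in blast)+

lemma least_prof_eqI: "m \<in> S \<Longrightarrow> \<forall>y\<in>S. prof_le m y \<Longrightarrow> least_prof S = m"
  unfolding least_prof_def by (rule the_equality) (use prof_le_antisym in blast)+

section \<open>Recurrence in sequences with finitely many values\<close>

lemma INFM_Suc_iff: "(\<exists>\<^sub>\<infinity>n. P (Suc n)) \<longleftrightarrow> (\<exists>\<^sub>\<infinity>n. P n)"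
  unfolding frequently_def cofinite_eq_sequentially
  using eventually_sequentially_Suc[of "\<lambda>n. \<not> P n"] by simp

lemma recurrent_window:
  fixes p :: "nat \<Rightarrow> 'a" and c :: "nat \<Rightarrow> 'b::linorder"
  assumes "finite (range p)" "finite (range c)"
  obtains m n where "m < n" "p m = p n" "Max (c ` {m..<n}) = Max {k. \<exists>\<^sub>\<infinity>i. c i = k}"
proof -
  let ?C = "{k. \<exists>\<^sub>\<infinity>i. c i = k}"
  have ex_recurrent: "\<exists>y\<in>range f. \<exists>\<^sub>\<infinity>i. f i = y" if "finite (range f)" for f :: "nat \<Rightarrow> 'x"
    using INFM_finite_Bex_distrib[OF that, of "\<lambda>y i. f i = y"] by simp
  have "?C \<subseteq> range c" using INFM_EX by fastforce
  then have finC: "finite ?C" using assms(2) finite_subset by blast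
  have "?C \<noteq> {}" using ex_recurrent[OF assms(2)] by blast
  then have top: "\<exists>\<^sub>\<infinity>i. c i = Max ?C" using Max_in[OF finC] by blast
  have "\<forall>\<^sub>\<infinity>i. \<forall>k\<in>range c - ?C. c i \<noteq> k"
    using assms(2) by (simp add: MOST_finite_Ball_distrib)
  then have "\<forall>\<^sub>\<infinity>i. c i \<in> ?C" by (rule MOST_mono) blast
  then obtain N where N: "\<And>i. N \<le> i \<Longrightarrow> c i \<in> ?C" unfolding MOST_nat_le by blast
  obtain q where q: "\<exists>\<^sub>\<infinity>i. p i = q" using ex_recurrent[OF assms(1)] by blast
  obtain m where m: "N \<le> m" "p m = q" using q unfolding INFM_nat_le by blast
  obtain k where k: "m \<le> k" "c k = Max ?C" using top unfolding INFM_nat_le by blast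
  obtain n where n: "k < n" "p n = q" using q unfolding INFM_nat by blast
  have "Max (c ` {m..<n}) = Max ?C"
  proof (rule Max_eqI)
    show "y \<le> Max ?C" if "y \<in> c ` {m..<n}" for y
      using that N m(1) Max_ge[OF finC] by fastforce
    show "Max ?C \<in> c ` {m..<n}" using k n by force
  qed simp
  then show thesis using that[of m n] m n k by simp
qed

section \<open>Descending sequences of colour profiles\<close>

lemma fsupp_sum_unitv:
  assumes "finite A"
  shows "fsupp (\<lambda>i. \<Sum>j\<in>A. unitv (c j) i)"
proof -
  have "{i. (\<Sum>j\<in>A. unitv (c j) i) \<noteq> 0} \<subseteq> c ` A"
    using sum.not_neutral_contains_not_neutral by (fastforce simp: unitv_def split: if_splits)
  then show ?thesis unfolding fsupp_def using assms finite_subset by blast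
qed

lemma descent_telescope:
  fixes p :: "nat \<Rightarrow> nat \<Rightarrow> int" and c :: "nat \<Rightarrow> nat"
  assumes fsupp: "\<And>n. fsupp (p n)"
    and descent: "\<And>n. prof_le (Fin (\<lambda>i. unitv (c n) i + p (Suc n) i)) (Fin (p n))"
    and "m \<le> n"
  shows "prof_le (Fin (\<lambda>i. (\<Sum>j\<in>{m..<n}. unitv (c j) i) + p n i)) (Fin (p m))"
  using \<open>m \<le> n\<close>
proof (induction n rule: dec_induct)
  case base
  then show ?case by (simp add: prof_le_def)
next
  case (step n)
  let ?S = "\<lambda>i. \<Sum>j\<in>{m..<n}. unitv (c j) i"
  have "prof_le (prof_add (Fin ?S) (Fin (\<lambda>i. unitv (c n) i + p (Suc n) i)))
                (prof_add (Fin ?S) (Fin (p n)))"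
    using descent by (rule prof_le_add_left)
  moreover have "(\<lambda>i. ?S i + (unitv (c n) i + p (Suc n) i))
      = (\<lambda>i. (\<Sum>j\<in>{m..<Suc n}. unitv (c j) i) + p (Suc n) i)"
    using step(1) by (simp add: fun_eq_iff)
  ultimately have "prof_le (Fin (\<lambda>i. (\<Sum>j\<in>{m..<Suc n}. unitv (c j) i) + p (Suc n) i))
                           (Fin (\<lambda>i. ?S i + p n i))"
    by simp
  then show ?case
    by (rule prof_le_trans[OF _ step.IH]) (simp_all add: fsupp fsupp_sum_unitv fsupp_add del: sum.op_ivl_Suc)
qed

lemma descending_profiles_odd_limit_colour:
  fixes p :: "nat \<Rightarrow> nat \<Rightarrow> int" and c :: "nat \<Rightarrow> nat"
  assumes "finite (range p)" "finite (range c)" "\<And>n. fsupp (p n)"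
    and "\<And>n. prof_le (Fin (\<lambda>i. unitv (c n) i + p (Suc n) i)) (Fin (p n))"
  shows "odd (Max {k. \<exists>\<^sub>\<infinity>n. c n = k})"
proof -
  obtain m n where mn: "m < n" "p m = p n" and top: "Max (c ` {m..<n}) = Max {k. \<exists>\<^sub>\<infinity>i. c i = k}"
    using recurrent_window[OF assms(1,2)] .
  define S where "S = (\<lambda>i. \<Sum>j\<in>{m..<n}. unitv (c j) i)"
  define q where "q = p m"
  have S_nonneg: "0 \<le> S i" for i unfolding S_def unitv_def by (rule sum_nonneg) simp
  have S_nz: "S i \<noteq> 0 \<longleftrightarrow> i \<in> c ` {m..<n}" for i
  proof -
    have "S i = 0 \<longleftrightarrow> (\<forall>j\<in>{m..<n}. unitv (c j) i = 0)"
      unfolding S_def by (rule sum_nonneg_eq_0_iff) (auto simp: unitv_def)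
    then show ?thesis unfolding unitv_def by auto
  qed
  have Max_in_window: "Max (c ` {m..<n}) \<in> c ` {m..<n}" using mn(1) by (intro Max_in) auto
  have "prof_le (Fin (\<lambda>i. S i + q i)) (Fin q)"
    using descent_telescope[of p c m n, OF assms(3,4)] mn unfolding S_def q_def by simp
  moreover have "(\<lambda>i. S i + q i) \<noteq> q"
    using S_nz[of "Max (c ` {m..<n})"] Max_in_window by (auto simp: fun_eq_iff)
  ultimately have "vec_less (\<lambda>i. S i + q i) q"
    unfolding prof_le_def by simp
  then have "vec_less (\<lambda>i. q i + S i) (\<lambda>i. q i + 0)"
    by (simp add: add.commute)
  then have pos: "vec_pos (\<lambda>i. 0 - S i)"
    unfolding vec_less_add_left vec_less_iff_vec_pos .
  have "fsupp (\<lambda>i. 0 - S i)"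
    unfolding S_def by (intro fsupp_diff fsupp_sum_unitv) (simp_all add: fsupp_def)
  then obtain k where above: "\<forall>i>k. S i = 0" and sign: "0 < (-1) ^ k * (0 - S k)"
    using pos vec_pos_iff_leading by auto
  have Sk: "0 < S k" using sign S_nonneg[of k] by (cases "S k = 0") auto
  have "k = Max (c ` {m..<n})"
  proof (rule antisym)
    show "k \<le> Max (c ` {m..<n})" using Sk S_nz[of k] by (intro Max_ge) auto
    show "Max (c ` {m..<n}) \<le> k" using above S_nz Max_in_window by (meson leI)
  qed
  then show ?thesis using sign Sk top by (cases "even k") (auto simp: zero_less_mult_iff)
qed

section \<open>Paths and plays\<close>

definition fin_path :: "('a \<times> 'a) set \<Rightarrow> 'a \<Rightarrow> 'a list \<Rightarrow> bool" where
  "fin_path F s xs \<longleftrightarrow> xs \<noteq> [] \<and> hd xs = s \<and> (\<forall>i. Suc i < length xs \<longrightarrow> (xs ! i, xs ! Suc i) \<in> F)"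

lemma fin_play_iff_maximal_path: "fin_play F s xs \<longleftrightarrow> fin_path F s xs \<and> (\<forall>y. (last xs, y) \<notin> F)"
  unfolding fin_play_def fin_path_def by blast

lemma fin_path_snoc: "fin_path F s xs \<Longrightarrow> (last xs, y) \<in> F \<Longrightarrow> fin_path F s (xs @ [y])"
  unfolding fin_path_def by (auto simp: nth_append last_conv_nth less_Suc_eq) (metis One_nat_def diff_Suc_1)

lemma lasso_inf_play:
  assumes path: "fin_path F s xs" and ij: "i < j" "j < length xs" "xs ! i = xs ! j"
  shows "\<exists>f. inf_play F s f"
proof -
  define idx where "idx n = (if n < i then n else i + (n - i) mod (j - i))" for n
  have idx_less: "idx n < j" for n
  proof -
    have "(n - i) mod (j - i) < j - i" using ij(1) by simp
    then have "i + (n - i) mod (j - i) < j" by linarith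
    then show ?thesis using ij(1) unfolding idx_def by simp
  qed
  have idx_Suc: "xs ! idx (Suc n) = xs ! Suc (idx n)" for n
  proof (cases "n < i")
    case True
    then show ?thesis unfolding idx_def by (cases "Suc n = i") auto
  next
    case False
    then show ?thesis using ij unfolding idx_def
      by (auto simp: mod_Suc Suc_diff_le intro!: arg_cong[where f = "(!) xs"])
  qed
  have "(xs ! idx n, xs ! Suc (idx n)) \<in> F" for n
    using path idx_less[of n] ij(2) unfolding fin_path_def by simp
  moreover have "xs ! idx 0 = s"
    using path ij(1) unfolding fin_path_def idx_def by (auto simp: hd_conv_nth)
  ultimately have "inf_play F s (\<lambda>n. xs ! idx n)" unfolding inf_play_def idx_Suc by simp
  then show ?thesis by blast
qed

lemma finite_fin_paths:
  assumes "finite A" "F \<subseteq> A \<times> A" "s \<in> A" "\<nexists>f. inf_play F s f"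
  shows "finite {xs. fin_path F s xs}"
proof (rule finite_subset)
  show "{xs. fin_path F s xs} \<subseteq> {xs. set xs \<subseteq> A \<and> length xs \<le> card A}"
  proof
    fix xs assume "xs \<in> {xs. fin_path F s xs}"
    then have path: "fin_path F s xs" by simp
    have "set xs \<subseteq> A"
    proof
      fix x assume "x \<in> set xs"
      then obtain k where "k < length xs" "xs ! k = x" by (auto simp: in_set_conv_nth)
      then show "x \<in> A"
        using path assms(2,3) unfolding fin_path_def
        by (cases k) (auto simp: hd_conv_nth)
    qed
    moreover have "distinct xs"
      unfolding distinct_conv_nth
      by (metis assms(4) lasso_inf_play[OF path] linorder_neqE_nat)
    ultimately show "xs \<in> {xs. set xs \<subseteq> A \<and> length xs \<le> card A}"
      using assms(1) by (metis card_mono distinct_card mem_Collect_eq)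
  qed
  show "finite {xs. set xs \<subseteq> A \<and> length xs \<le> card A}"
    using finite_lists_length_le[OF assms(1)] .
qed

lemma fin_play_exists:
  assumes "finite A" "F \<subseteq> A \<times> A" "s \<in> A" "\<nexists>f. inf_play F s f"
  shows "\<exists>xs. fin_play F s xs"
proof -
  let ?P = "{xs. fin_path F s xs}"
  have fin: "finite (length ` ?P)" using finite_fin_paths[OF assms] by simp
  have "[s] \<in> ?P" unfolding fin_path_def by simp
  then have "Max (length ` ?P) \<in> length ` ?P" using fin by (intro Max_in) auto
  then obtain xs where xs: "fin_path F s xs" "length xs = Max (length ` ?P)" by auto
  have "(last xs, y) \<notin> F" for y
  proof
    assume "(last xs, y) \<in> F"
    then have "length (xs @ [y]) \<in> length ` ?P" using fin_path_snoc[OF xs(1)] by blast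
    then show False using Max_ge[OF fin] xs(2) by fastforce
  qed
  then show ?thesis using xs(1) unfolding fin_play_iff_maximal_path by blast
qed

lemma consistent_play_along:
  assumes str: "hist_strategy0 V E own str" and "s \<in> V" and "E \<subseteq> V \<times> V"
    and P_E: "\<And>u w. P u w \<Longrightarrow> (u, w) \<in> E"
    and P0: "\<And>u w. u \<in> V \<Longrightarrow> own u = 0 \<Longrightarrow> (u, w) \<in> E \<Longrightarrow> P u w"
    and P1: "\<And>u. u \<in> V \<Longrightarrow> own u \<noteq> 0 \<Longrightarrow> \<exists>w. P u w"
  obtains f where "consistent_play E own str s f" "\<And>n. P (f n) (f (Suc n))"
proof -
  define nxt where "nxt h = (if own (last h) = 0 then str h else SOME w. P (last h) w)" for h
  have nxt: "P (last h) (nxt h)" if "set h \<subseteq> V" "h \<noteq> []" for h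
  proof (cases "own (last h) = 0")
    case True
    then have "(last h, str h) \<in> E" using str that unfolding hist_strategy0_def by blast
    moreover have "last h \<in> V" using that by auto
    ultimately show ?thesis using P0 True unfolding nxt_def by simp
  next
    case False
    moreover have "last h \<in> V" using that by auto
    ultimately have "\<exists>w. P (last h) w" using P1 by blast
    then show ?thesis using False unfolding nxt_def by (simp add: someI_ex)
  qed
  define hist where "hist = rec_nat [s] (\<lambda>_ h. h @ [nxt h])"
  have hist_Suc: "hist (Suc n) = hist n @ [nxt (hist n)]" for n unfolding hist_def by simp
  have hist_V: "set (hist n) \<subseteq> V \<and> hist n \<noteq> []" for n
  proof (induction n)
    case 0
    then show ?case using \<open>s \<in> V\<close> by (simp add: hist_def)
  next
    case (Suc n)
    then have "(last (hist n), nxt (hist n)) \<in> E" using nxt P_E by blast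
    then have "nxt (hist n) \<in> V" using \<open>E \<subseteq> V \<times> V\<close> by blast
    then show ?case using Suc hist_Suc by simp
  qed
  define f where "f n = last (hist n)" for n
  have f_Suc: "f (Suc n) = nxt (hist n)" for n unfolding f_def hist_Suc by simp
  have hist_eq: "map f [0..<Suc n] = hist n" for n
    by (induction n) (simp_all add: f_def hist_def f_Suc[unfolded f_def])
  have P_f: "P (f n) (f (Suc n))" for n using nxt hist_V f_Suc unfolding f_def by simp
  have "consistent_play E own str s f"
    unfolding consistent_play_def
  proof (intro conjI allI impI)
    show "f 0 = s" by (simp add: f_def hist_def)
    show "(f n, f (Suc n)) \<in> E" for n using P_f P_E by blast
    show "f (Suc n) = str (map f [0..<Suc n])" if "own (f n) = 0" for n
      using that unfolding hist_eq f_Suc by (simp add: nxt_def f_def)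
  qed
  then show thesis using that P_f by blast
qed

section \<open>Reasonable strategies in the escape arena\<close>

lemma fsupp_path_prof: "fsupp_prof (path_prof col xs)"
proof -
  let ?h = "\<lambda>i x. case x of None \<Rightarrow> 0 | Some v \<Rightarrow> unitv (col v) i"
  have "(\<Sum>x\<leftarrow>xs. ?h i x) = 0" if "i \<notin> (\<lambda>x. case x of None \<Rightarrow> 0 | Some v \<Rightarrow> col v) ` set xs" for i
    using that by (induction xs) (auto simp: unitv_def split: option.splits)
  then have "{i. (\<Sum>x\<leftarrow>xs. ?h i x) \<noteq> 0} \<subseteq> (\<lambda>x. case x of None \<Rightarrow> 0 | Some v \<Rightarrow> col v) ` set xs"
    by blast
  then show ?thesis unfolding path_prof_def by (auto simp: fsupp_def intro: finite_subset)
qed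

lemma esc_edges_closed:
  "E \<subseteq> V \<times> V \<Longrightarrow> esc_edges V E own \<subseteq> insert None (Some ` V) \<times> insert None (Some ` V)"
  unfolding esc_edges_def by auto

lemma esc_edges_source: "E \<subseteq> V \<times> V \<Longrightarrow> (x, y) \<in> esc_edges V E own \<Longrightarrow> \<exists>u\<in>V. x = Some u"
  unfolding esc_edges_def by auto

locale reasonable_escape_strategy =
  fixes V :: "'v set" and E :: "('v \<times> 'v) set" and own col :: "'v \<Rightarrow> nat" and d :: nat
    and \<sigma> :: "('v option \<times> 'v option) set"
  assumes arena: "arena V E own col d"
    and strategy: "strategy 0 V E own \<sigma>"
    and reasonable: "reasonable V E own col \<sigma>"
begin

abbreviation val :: "'v \<Rightarrow> prof" where
  "val u \<equiv> valuation V E own col \<sigma> (Some u)"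

lemma finite_V: "finite V" and E_subset: "E \<subseteq> V \<times> V"
  using arena unfolding arena_def by auto

lemma play_graph_subset: "strategy 1 V E own \<tau> \<Longrightarrow> \<sigma> \<union> \<tau> \<subseteq> esc_edges V E own"
  using strategy unfolding strategy_def E0_def E1_def esc_edges_def by auto

lemma inf_play_won0:
  assumes \<tau>: "strategy 1 V E own \<tau>" and play: "inf_play (\<sigma> \<union> \<tau>) x f"
  shows "won0_seq col (\<lambda>n. the (f n))"
proof -
  define g where "g n = the (f n)" for n
  have edge: "(f n, f (Suc n)) \<in> \<sigma> \<union> \<tau>" for n using play unfolding inf_play_def by blast
  have f_g: "f n = Some (g n)" and g_V: "g n \<in> V" for n
    using esc_edges_source[OF E_subset] play_graph_subset[OF \<tau>] edge[of n] unfolding g_def by force+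
  have "finite (range g)" "finite (range (\<lambda>i. col (g i)))"
    using g_V finite_V by (auto intro: finite_subset[of _ V] finite_subset[of _ "col ` V"])
  then obtain m n where mn: "m < n" "g m = g n"
    and top: "Max ((\<lambda>i. col (g i)) ` {m..<n}) = Max {k. \<exists>\<^sub>\<infinity>i. col (g i) = k}"
    by (rule recurrent_window)
  define xs where "xs = map f [m..<n]"
  have "cycle_in (\<sigma> \<union> \<tau>) xs"
    unfolding cycle_in_def
  proof (intro conjI allI impI)
    show "xs \<noteq> []" using mn unfolding xs_def by simp
    show "(xs ! i, xs ! Suc i) \<in> \<sigma> \<union> \<tau>" if "Suc i < length xs" for i
      using that edge[of "m + i"] unfolding xs_def by simp
    have "last xs = f (n - 1)" "hd xs = f n"
      using mn f_g unfolding xs_def by (simp_all add: last_map hd_map)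
    then show "(last xs, hd xs) \<in> \<sigma> \<union> \<tau>" using edge[of "n - 1"] mn(1) by simp
  qed
  then have "cycle_in (\<sigma> \<union> E1 V E own) xs"
    using \<tau> unfolding cycle_in_def strategy_def by auto
  then have "even (Max {col v | v. Some v \<in> set xs})"
    using reasonable unfolding reasonable_def by blast
  moreover have "{col v | v. Some v \<in> set xs} = (\<lambda>i. col (g i)) ` {m..<n}"
    unfolding xs_def using f_g by auto
  ultimately show ?thesis using top unfolding won0_seq_def g_def by simp
qed

lemma play_prof_fsupp:
  assumes "strategy 1 V E own \<tau>" "y \<in> play_profs col (\<sigma> \<union> \<tau>) x"
  shows "fsupp_prof y \<and> y \<noteq> NegInf"
proof -
  from assms(2) consider xs where "y = path_prof col xs"
    | f where "y = (if won0_seq col (\<lambda>n. the (f n)) then PosInf else NegInf)" "inf_play (\<sigma> \<union> \<tau>) x f"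
    unfolding play_profs_def by blast
  then show ?thesis
  proof cases
    case 1
    then show ?thesis using fsupp_path_prof[of col xs] by (simp add: path_prof_def)
  next
    case 2
    then show ?thesis using inf_play_won0[OF assms(1)] by simp
  qed
qed

lemma greatest_play_prof:
  assumes \<tau>: "strategy 1 V E own \<tau>" and "u \<in> V"
  defines "P \<equiv> play_profs col (\<sigma> \<union> \<tau>) (Some u)"
  shows "greatest_prof P \<in> P \<and> (\<forall>y\<in>P. prof_le y (greatest_prof P))"
proof -
  let ?A = "insert None (Some ` V)"
  have closed: "\<sigma> \<union> \<tau> \<subseteq> ?A \<times> ?A"
    using esc_edges_closed[OF E_subset] play_graph_subset[OF \<tau>] by blast
  have "\<exists>m\<in>P. \<forall>y\<in>P. prof_le y m"
  proof (cases "\<exists>f. inf_play (\<sigma> \<union> \<tau>) (Some u) f")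
    case True
    then have "PosInf \<in> P" using inf_play_won0[OF \<tau>] unfolding P_def play_profs_def by force
    then show ?thesis using prof_le_PosInf by blast
  next
    case False
    then have P: "P = path_prof col ` {xs. fin_play (\<sigma> \<union> \<tau>) (Some u) xs}"
      unfolding P_def play_profs_def by auto
    have "finite P"
      unfolding P fin_play_iff_maximal_path
      using finite_fin_paths[OF _ closed _ False] finite_V \<open>u \<in> V\<close> by (auto intro: finite_subset)
    moreover have "P \<noteq> {}"
      unfolding P using fin_play_exists[OF _ closed _ False] finite_V \<open>u \<in> V\<close> by auto
    moreover have "\<forall>y\<in>P. fsupp_prof y" using play_prof_fsupp[OF \<tau>] unfolding P_def by blast
    ultimately show ?thesis by (rule prof_greatest_exists)
  qed
  then obtain m where "m \<in> P" "\<forall>y\<in>P. prof_le y m" by blast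
  then show ?thesis using greatest_prof_eqI[of m P] by simp
qed

lemma play_prof_Cons:
  assumes edge: "(Some u, Some w) \<in> \<sigma> \<union> \<tau>" and y: "y \<in> play_profs col (\<sigma> \<union> \<tau>) (Some w)"
  shows "prof_add (wp col (Some u)) y \<in> play_profs col (\<sigma> \<union> \<tau>) (Some u)"
proof -
  let ?F = "\<sigma> \<union> \<tau>"
  from y consider xs where "y = path_prof col xs" "fin_play ?F (Some w) xs"
    | f where "y = (if won0_seq col (\<lambda>n. the (f n)) then PosInf else NegInf)" "inf_play ?F (Some w) f"
    unfolding play_profs_def by blast
  then show ?thesis
  proof cases
    case 1
    then have "fin_play ?F (Some u) (Some u # xs)"
      using edge unfolding fin_play_def by (auto simp: nth_Cons hd_conv_nth split: nat.split)
    moreover have "path_prof col (Some u # xs) = prof_add (wp col (Some u)) y"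
      using 1 by (simp add: path_prof_def wp_def)
    ultimately show ?thesis unfolding play_profs_def by (metis (mono_tags, lifting) UnI1 mem_Collect_eq)
  next
    case 2
    define g where "g n = (case n of 0 \<Rightarrow> Some u | Suc m \<Rightarrow> f m)" for n
    have "inf_play ?F (Some u) g"
      using 2(2) edge unfolding inf_play_def g_def by (auto split: nat.split)
    moreover have "won0_seq col (\<lambda>n. the (g n)) \<longleftrightarrow> won0_seq col (\<lambda>n. the (f n))"
      using INFM_Suc_iff[of "\<lambda>n. col (the (g n)) = _"] unfolding won0_seq_def g_def by simp
    ultimately show ?thesis using 2(1) unfolding play_profs_def wp_def by auto
  qed
qed

lemma valuation_attained:
  assumes "u \<in> V"
  obtains \<tau> where "strategy 1 V E own \<tau>" "val u = greatest_prof (play_profs col (\<sigma> \<union> \<tau>) (Some u))"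
    and "\<And>\<tau>'. strategy 1 V E own \<tau>' \<Longrightarrow> prof_le (val u) (greatest_prof (play_profs col (\<sigma> \<union> \<tau>') (Some u)))"
proof -
  let ?T = "{\<tau>. strategy 1 V E own \<tau>}"
  let ?h = "\<lambda>\<tau>. greatest_prof (play_profs col (\<sigma> \<union> \<tau>) (Some u))"
  have "E1 V E own \<subseteq> (\<lambda>(a, b). (Some a, Some b)) ` E" unfolding E1_def by auto
  then have "finite (E1 V E own)"
    using E_subset finite_V by (meson finite_SigmaI finite_imageI finite_subset)
  then have "finite ?T" unfolding strategy_def by (auto intro: finite_subset[of _ "Pow (E1 V E own)"])
  moreover have "E1 V E own \<in> ?T"
    using arena unfolding arena_def strategy_def E1_def by auto
  moreover have "\<forall>x\<in>?h ` ?T. fsupp_prof x"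
    using greatest_play_prof[OF _ assms] play_prof_fsupp by blast
  ultimately obtain \<tau> where "\<tau> \<in> ?T" "\<forall>\<tau>'\<in>?T. prof_le (?h \<tau>) (?h \<tau>')"
    using prof_least_exists[of "?h ` ?T"] by blast
  moreover from this have "val u = ?h \<tau>"
    unfolding valuation_def by (auto intro: least_prof_eqI)
  ultimately show thesis using that by auto
qed

lemma valuation_le_greatest:
  "u \<in> V \<Longrightarrow> strategy 1 V E own \<tau>
    \<Longrightarrow> prof_le (val u) (greatest_prof (play_profs col (\<sigma> \<union> \<tau>) (Some u)))"
  by (metis valuation_attained)

lemma valuation_fsupp: "u \<in> V \<Longrightarrow> fsupp_prof (val u) \<and> val u \<noteq> NegInf"
  by (metis valuation_attained greatest_play_prof play_prof_fsupp)

definition descent_edge :: "'v \<Rightarrow> 'v \<Rightarrow> bool" where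
  "descent_edge u w \<longleftrightarrow> (u, w) \<in> E \<and> prof_le (prof_add (wp col (Some u)) (val w)) (val u)"

lemma fsupp_prof_wp_add: "fsupp_prof x \<Longrightarrow> fsupp_prof (prof_add (wp col (Some u)) x)"
  unfolding wp_def by (simp add: fsupp_prof_add fsupp_unitv)

lemma player0_descent:
  assumes "improvements V E own col \<sigma> = {}" "u \<in> V" "own u = 0" "(u, w) \<in> E"
  shows "descent_edge u w"
proof -
  have "(Some u, Some w) \<in> E0 V E own" using assms(2-4) unfolding E0_def esc_edges_def by auto
  then have "\<not> prof_less (val u) (prof_add (wp col (Some u)) (val w))"
    using assms(1) unfolding improvements_def by blast
  moreover have "w \<in> V" using assms(4) E_subset by blast
  ultimately show ?thesis
    unfolding descent_edge_def
    using assms(2,4) valuation_fsupp fsupp_prof_wp_add prof_not_less_iff_le by blast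
qed

lemma player1_descent:
  assumes "u \<in> V" "own u = 1"
  shows "\<exists>w. descent_edge u w"
proof -
  obtain \<tau> where \<tau>: "strategy 1 V E own \<tau>"
    and val_u: "val u = greatest_prof (play_profs col (\<sigma> \<union> \<tau>) (Some u))"
    using valuation_attained[OF assms(1)] by blast
  obtain y where "(Some u, y) \<in> \<tau>" using \<tau> assms unfolding strategy_def by auto
  moreover have "\<tau> \<subseteq> E1 V E own" using \<tau> unfolding strategy_def by simp
  ultimately obtain w where edge: "(Some u, Some w) \<in> \<tau>" "(u, w) \<in> E" unfolding E1_def by blast
  then have "w \<in> V" using E_subset by blast
  define G where "G = greatest_prof (play_profs col (\<sigma> \<union> \<tau>) (Some w))"
  have G: "G \<in> play_profs col (\<sigma> \<union> \<tau>) (Some w)"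
    using greatest_play_prof[OF \<tau> \<open>w \<in> V\<close>] unfolding G_def by blast
  then have "prof_add (wp col (Some u)) G \<in> play_profs col (\<sigma> \<union> \<tau>) (Some u)"
    using play_prof_Cons edge(1) by blast
  then have "prof_le (prof_add (wp col (Some u)) G) (val u)"
    using greatest_play_prof[OF \<tau> assms(1)] val_u by simp
  moreover have "prof_le (prof_add (wp col (Some u)) (val w)) (prof_add (wp col (Some u)) G)"
    using valuation_le_greatest[OF \<open>w \<in> V\<close> \<tau>] prof_le_add_left unfolding G_def wp_def by simp
  ultimately have "prof_le (prof_add (wp col (Some u)) (val w)) (val u)"
    using prof_le_trans fsupp_prof_wp_add valuation_fsupp play_prof_fsupp[OF \<tau> G]
      \<open>w \<in> V\<close> assms(1) by meson
  then show ?thesis using edge(2) unfolding descent_edge_def by blast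
qed

lemma descent_valuations_finite:
  assumes descent: "\<And>n. descent_edge (f n) (f (Suc n))" and "val (f 0) \<noteq> PosInf"
  obtains p where "\<And>n. val (f n) = Fin (p n)" "\<And>n. fsupp (p n)" "finite (range p)"
proof -
  have f_V: "f n \<in> V" for n
    using descent[of n] E_subset unfolding descent_edge_def by blast
  have "val (f n) \<noteq> PosInf" for n
  proof (induction n)
    case (Suc n)
    then show ?case
      using descent[of n] prof_le_PosInf_iff unfolding descent_edge_def wp_def by fastforce
  qed (fact assms(2))
  define fin_part where "fin_part x = (case x of Fin q \<Rightarrow> q)" for x
  have "val (f n) = Fin (fin_part (val (f n))) \<and> fsupp (fin_part (val (f n)))" for n
    using valuation_fsupp[OF f_V[of n]] \<open>val (f n) \<noteq> PosInf\<close>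
    unfolding fin_part_def by (cases "val (f n)") auto
  moreover have "range (\<lambda>n. fin_part (val (f n))) \<subseteq> (\<lambda>v. fin_part (val v)) ` V" using f_V by blast
  then have "finite (range (\<lambda>n. fin_part (val (f n))))" using finite_V finite_subset by blast
  ultimately show thesis by (intro that[of "\<lambda>n. fin_part (val (f n))"]) auto
qed

theorem improvements_nonempty:
  assumes "s \<in> W0 V E own col" "prof_less (val s) PosInf"
  shows "improvements V E own col \<sigma> \<noteq> {}"
proof
  assume none: "improvements V E own col \<sigma> = {}"
  obtain str where str: "hist_strategy0 V E own str" and "s \<in> V"
    and won: "\<And>f. consistent_play E own str s f \<Longrightarrow> won0_seq col f"
    using assms(1) unfolding W0_def by blast
  have "own u = 1" if "u \<in> V" "own u \<noteq> 0" for u using arena that unfolding arena_def by auto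
  then obtain f where play: "consistent_play E own str s f"
    and descent: "\<And>n. descent_edge (f n) (f (Suc n))"
    using consistent_play_along[OF str \<open>s \<in> V\<close> E_subset, of descent_edge]
      player0_descent[OF none] player1_descent unfolding descent_edge_def by blast
  have "val (f 0) \<noteq> PosInf" using assms(2) play prof_less_irrefl unfolding consistent_play_def by metis
  then obtain p where p: "\<And>n. val (f n) = Fin (p n)" "\<And>n. fsupp (p n)" "finite (range p)"
    using descent_valuations_finite descent by blast
  have "range (\<lambda>n. col (f n)) \<subseteq> col ` V"
    using descent E_subset unfolding descent_edge_def by blast
  then have "finite (range (\<lambda>n. col (f n)))" using finite_V finite_subset by blast
  moreover have "prof_le (Fin (\<lambda>i. unitv (col (f n)) i + p (Suc n) i)) (Fin (p n))" for n
    using descent[of n] p(1) unfolding descent_edge_def wp_def by simp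
  ultimately have "odd (Max {k. \<exists>\<^sub>\<infinity>n. col (f n) = k})"
    using descending_profiles_odd_limit_colour p(2,3) by blast
  then show False using won[OF play] unfolding won0_seq_def by simp
qed

end

theorem mainTheorem10:
  fixes V :: "'v set" and E :: "('v \<times> 'v) set" and own col :: "'v \<Rightarrow> nat" and d :: nat
    and \<sigma> :: "('v option \<times> 'v option) set" and s :: 'v
  assumes "arena V E own col d"
    and "strategy 0 V E own \<sigma>"
    and "reasonable V E own col \<sigma>"
    and "s \<in> W0 V E own col"
    and "prof_less (valuation V E own col \<sigma> (Some s)) PosInf"
  shows "improvements V E own col \<sigma> \<noteq> {}"
proof -
  interpret reasonable_escape_strategy V E own col d \<sigma>
    using assms(1-3) by unfold_locales
  show ?thesis using improvements_nonempty assms(4,5) .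
qed

end
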